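(* For every $n\ge0$ and every formula $\alpha$: $\vDash_{\mathcal{R}_n^0}\circ^{n+2}\alpha$.
   Context: Formulas are built from a countable set of propositional variables using unary $\neg,\circ$ and binary $\land,\lor,\to$; $\circ^0\alpha=\alpha$, $\circ^{m+1}\alpha=\circ(\circ^m\alpha)$. $\mathcal{M}_0$ is the three-valued Nmatrix with values $T,t,F$, designated set $D=\{T,t\}$ and multioperations: $\neg T=\{F\}$, $\neg t=\neg F=\{T,t\}$; $\circ T=\circ F=\{T,t\}$, $\circ t=\{F\}$; $x\land y=\{T,t\}$ if $x,y\in D$, else $\{F\}$; $x\lor y=\{T,t\}$ if $x\in D$ or $y\in D$, else $\{F\}$; $x\to y=\{T,t\}$ if $x\notin D$ or $y\in D$, else $\{F\}$. A valuation over $\mathcal{M}_0$ is a map $\vartheta$ from formulas to $\{T,t,F\}$ with $\vartheta(\alpha\#\beta)\in\vartheta(\alpha)\#\vartheta(\beta)$ and $\vartheta(\star\alpha)\in\star\vartheta(\alpha)$ for $\star\in\{\neg,\circ\}$. $\mathcal{F}_n^0$ is the set of valuations $\vartheta$ over $\mathcal{M}_0$ such that for every formula $\alpha$: if $\vartheta(\circ^n\alpha)\in\{T,F\}$ then $\vartheta(\circ^{n+1}\alpha)=T$. The restricted Nmatrix $\mathcal{R}_n^0=\langle\mathcal{M}_0,\mathcal{F}_n^0\rangle$ has consequence: $\Gamma\vDash_{\mathcal{R}_n^0}\alpha$ iff every $\vartheta\in\mathcal{F}_n^0$ with $\vartheta[\Gamma]\subseteq D$ has $\vartheta(\alpha)\in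 D$. *)

theory Defs
  imports Main
begin

datatype fm = Var nat | Neg fm | Circ fm | And fm fm | Or fm fm | Imp fm fm

fun circ_pow :: "nat \<Rightarrow> fm \<Rightarrow> fm" where
  "circ_pow 0 a = a"
| "circ_pow (Suc m) a = Circ (circ_pow m a)"

datatype val = T | t | F

definition D :: "val set" where "D = {T, t}"

fun neg_M0 :: "val \<Rightarrow> val set" where
  "neg_M0 T = {F}"
| "neg_M0 t = {T, t}"
| "neg_M0 F = {T, t}"

fun circ_M0 :: "val \<Rightarrow> val set" where
  "circ_M0 T = {T, t}"
| "circ_M0 t = {F}"
| "circ_M0 F = {T, t}"

definition and_M0 :: "val \<Rightarrow> val \<Rightarrow> val set" where
  "and_M0 x y = (if x \<in> D \<and> y \<in> D then {T, t} else {F})"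

definition or_M0 :: "val \<Rightarrow> val \<Rightarrow> val set" where
  "or_M0 x y = (if x \<in> D \<or> y \<in> D then {T, t} else {F})"

definition imp_M0 :: "val \<Rightarrow> val \<Rightarrow> val set" where
  "imp_M0 x y = (if x \<notin> D \<or> y \<in> D then {T, t} else {F})"

definition valuation_M0 :: "(fm \<Rightarrow> val) \<Rightarrow> bool" where
  "valuation_M0 v \<longleftrightarrow>
     (\<forall>a. v (Neg a) \<in> neg_M0 (v a)) \<and>
     (\<forall>a. v (Circ a) \<in> circ_M0 (v a)) \<and>
     (\<forall>a b. v (And a b) \<in> and_M0 (v a) (v b)) \<and>
     (\<forall>a b. v (Or a b) \<in> or_M0 (v a) (v b)) \<and>
     (\<forall>a b. v (Imp a b) \<in> imp_M0 (v a) (v b))"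

definition F0 :: "nat \<Rightarrow> (fm \<Rightarrow> val) set" where
  "F0 n = {v. valuation_M0 v \<and>
              (\<forall>a. v (circ_pow n a) \<in> {T, F} \<longrightarrow> v (circ_pow (Suc n) a) = T)}"

definition conseq_R0 :: "nat \<Rightarrow> fm set \<Rightarrow> fm \<Rightarrow> bool" where
  "conseq_R0 n \<Gamma> a \<longleftrightarrow> (\<forall>v \<in> F0 n. v ` \<Gamma> \<subseteq> D \<longrightarrow> v a \<in> D)"

end

theory Submission
  imports Defs
begin

text \<open>Under every valuation of \<open>F0 n\<close> the formula \<open>\<circ>\<^bsup>n+1\<^esup>\<alpha>\<close> takes a classical value:
  if \<open>\<circ>\<^bsup>n\<^esup>\<alpha>\<close> is classical, the restriction makes \<open>\<circ>\<^bsup>n+1\<^esup>\<alpha>\<close> equal to \<open>T\<close>, and if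
  \<open>\<circ>\<^bsup>n\<^esup>\<alpha>\<close> has value \<open>t\<close>, the table of \<open>\<circ>\<close> forces \<open>F\<close>. Applying \<open>\<circ>\<close> to a
  classical value always yields a designated one.\<close>

lemma valuation_M0_Circ_designated_iff:
  assumes "valuation_M0 v"
  shows "v (Circ a) \<in> D \<longleftrightarrow> v a \<noteq> t"
proof -
  have "v (Circ a) \<in> circ_M0 (v a)"
    using assms by (simp add: valuation_M0_def)
  then show ?thesis
    by (cases "v a") (auto simp: D_def)
qed

lemma F0_circ_pow_Suc_classical:
  assumes "v \<in> F0 n"
  shows "v (circ_pow (Suc n) a) \<noteq> t"
proof (cases "v (circ_pow n a) = t")
  case True
  have "valuation_M0 v"
    using assms by (simp add: F0_def)
  with True show ?thesis
    using valuation_M0_Circ_designated_iff[of v "circ_pow n a"] by (auto simp: D_def)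
next
  case False
  then have "v (circ_pow n a) \<in> {T, F}"
    by (cases "v (circ_pow n a)") auto
  with assms have "v (circ_pow (Suc n) a) = T"
    unfolding F0_def by blast
  then show ?thesis
    by simp
qed

theorem theorem22:
  fixes n :: nat and \<alpha> :: fm
  shows "conseq_R0 n {} (circ_pow (n + 2) \<alpha>)"
  unfolding conseq_R0_def
proof (intro ballI impI)
  fix v assume v: "v \<in> F0 n"
  then have "valuation_M0 v"
    by (simp add: F0_def)
  moreover have "v (circ_pow (Suc n) \<alpha>) \<noteq> t"
    using v by (rule F0_circ_pow_Suc_classical)
  ultimately show "v (circ_pow (n + 2) \<alpha>) \<in> D"
    by (simp add: valuation_M0_Circ_designated_iff)
qed

end
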